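(* For $n$ large enough, there are linear trifferent codes of length $n$ and size at least $\tfrac13(9/5)^{n/4}$.
   Context: A linear trifferent code of length $n$ is a linear subspace $C\subseteq\mathbb{F}_3^n$ such that for any three distinct $x,y,z\in C$ there is a coordinate $i$ with $\{x_i,y_i,z_i\}=\mathbb{F}_3$. *)

theory Defs
  imports Complex_Main "HOL-Library.Numeral_Type"
begin

text \<open>The field F_3 is the type 3 (integers mod 3, a comm_ring_1).
  Words of length n are functions nat => 3 vanishing outside {0..<n}.\<close>

definition F3_words :: "nat \<Rightarrow> (nat \<Rightarrow> 3) set" where
  "F3_words n = {x. \<forall>i\<ge>n. x i = 0}"

definition linear_code :: "nat \<Rightarrow> (nat \<Rightarrow> 3) set \<Rightarrow> bool" where
  "linear_code n C \<longleftrightarrow> C \<subseteq> F3_words n \<and> (\<lambda>i. 0) \<in> C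
     \<and> (\<forall>x\<in>C. \<forall>y\<in>C. (\<lambda>i. x i + y i) \<in> C)
     \<and> (\<forall>c::3. \<forall>x\<in>C. (\<lambda>i. c * x i) \<in> C)"

definition trifferent :: "nat \<Rightarrow> (nat \<Rightarrow> 3) set \<Rightarrow> bool" where
  "trifferent n C \<longleftrightarrow> (\<forall>x\<in>C. \<forall>y\<in>C. \<forall>z\<in>C. x \<noteq> y \<and> y \<noteq> z \<and> x \<noteq> z
      \<longrightarrow> (\<exists>i<n. {x i, y i, z i} = (UNIV :: 3 set)))"

definition linear_trifferent_code :: "nat \<Rightarrow> (nat \<Rightarrow> 3) set \<Rightarrow> bool" where
  "linear_trifferent_code n C \<longleftrightarrow> linear_code n C \<and> trifferent n C"

end

theory Submission
  imports Defs "HOL-Library.FuncSet"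
begin

(* A message p in F_3^k is encoded in m blocks of four coordinates: block j, given by a pair of
  words (A_j, B_j), carries the tetracode word (u, v, u + v, u - v) of (u, v) = (A_j.p, B_j.p).
  Any two distinct nonzero tetracode words have a coordinate where they are nonzero and opposite,
  which is exactly what trifferentness asks of the differences y - x, z - x of a linear code.
  So the code is trifferent once every pair of independent messages a, b is separated by some
  block, i.e. gets distinct nonzero values (u, v) there.  For a uniform block the 2x2 matrix of
  values of a and b is uniform over F_3, and 25 of its 81 values do not separate; as unseparated
  pairs come in fours, a first-moment count finds blocks separating all pairs as soon as
  9^k 25^m < 4 81^m.  Taking m = n div 4 and 3^k just below 2 (9/5)^m gives the bound. *)

lemma sum_card_filter_swap:
  assumes "finite A" "finite B"
  shows "(\<Sum>x\<in>A. card {y \<in> B. R x y}) = (\<Sum>y\<in>B. card {x \<in> A. R x y})"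
proof -
  have "(\<Sum>x\<in>A. card {y \<in> B. R x y}) = (\<Sum>x\<in>A. \<Sum>y\<in>B. of_bool (R x y))"
    using assms(2) by (simp add: Collect_conj_eq Int_commute)
  also have "\<dots> = (\<Sum>y\<in>B. \<Sum>x\<in>A. of_bool (R x y))"
    by (rule sum.swap)
  also have "\<dots> = (\<Sum>y\<in>B. card {x \<in> A. R x y})"
    using assms(1) by (simp add: Collect_conj_eq Int_commute)
  finally show ?thesis .
qed

lemma sum_comp_uniform_fibres:
  fixes f :: "'a \<Rightarrow> 'b::finite"
  assumes "finite V" "\<And>y. card {x \<in> V. f x = y} = c"
  shows "(\<Sum>x\<in>V. h (f x)) = of_nat c * (\<Sum>y\<in>UNIV. h y)"
proof -
  have "(\<Sum>x\<in>V. h (f x)) = (\<Sum>y\<in>UNIV. \<Sum>x\<in>{x \<in> V. f x = y}. h (f x))"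
    using assms(1) by (rule sum.group[symmetric]) auto
  also have "\<dots> = (\<Sum>y\<in>UNIV. of_nat c * h y)"
  proof (rule sum.cong[OF refl])
    fix y
    have "(\<Sum>x\<in>{x \<in> V. f x = y}. h (f x)) = (\<Sum>x\<in>{x \<in> V. f x = y}. h y)"
      by (rule sum.cong) auto
    then show "(\<Sum>x\<in>{x \<in> V. f x = y}. h (f x)) = of_nat c * h y"
      by (simp add: assms(2))
  qed
  finally show ?thesis by (simp add: sum_distrib_left)
qed

lemma F3_cases: "(x::3) = 0 \<or> x = 1 \<or> x = 2"
proof (cases x rule: bit1_cases)
  case (of_int z)
  then have "z = 0 \<or> z = 1 \<or> z = 2" by auto
  then show ?thesis using of_int by auto
qed

lemma F3_exhaust: obtains "(x::3) = 0" | "x = 1" | "x = 2"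
  using F3_cases by blast

lemma F3_square_nonzero: "(e::3) \<noteq> 0 \<Longrightarrow> e * e = 1"
  by (cases e rule: F3_exhaust) auto

lemma F3_UNIV: "(UNIV :: 3 set) = {0, 1, 2}"
  using F3_cases by auto

lemma F3_two_mult [simp]: "2 * (x::3) = - x"
  by (cases x rule: F3_exhaust) auto

lemma F3_triple_eq_UNIV:
  assumes "(e::3) \<noteq> 0" shows "{x, x + e, x - e} = UNIV"
proof -
  have "y \<in> {x, x + e, x - e}" for y
    using assms by (cases x rule: F3_exhaust; cases y rule: F3_exhaust; cases e rule: F3_exhaust) auto
  then show ?thesis by auto
qed

type_synonym word = "nat \<Rightarrow> 3"

lemma F3_words_add [simp]: "p \<in> F3_words k \<Longrightarrow> q \<in> F3_words k \<Longrightarrow> (\<lambda>i. p i + q i) \<in> F3_words k"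
  and F3_words_diff [simp]: "p \<in> F3_words k \<Longrightarrow> q \<in> F3_words k \<Longrightarrow> (\<lambda>i. p i - q i) \<in> F3_words k"
  and F3_words_uminus [simp]: "p \<in> F3_words k \<Longrightarrow> (\<lambda>i. - p i) \<in> F3_words k"
  and F3_words_zero [simp]: "(\<lambda>i. 0) \<in> F3_words k"
  by (simp_all add: F3_words_def)

lemma F3_words_nonzero_coord:
  assumes "p \<in> F3_words k" "p \<noteq> (\<lambda>i. 0)"
  obtains i where "i < k" "p i \<noteq> 0"
  using assms by (auto simp: F3_words_def) (meson not_le)

lemma card_F3_words: "card (F3_words k) = 3 ^ k" and finite_F3_words [simp]: "finite (F3_words k)"
proof -
  have "bij_betw (\<lambda>p. restrict p {..<k}) (F3_words k) (PiE {..<k} (\<lambda>_. UNIV :: 3 set))"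
    by (rule bij_betw_byWitness[where f' = "\<lambda>f i. if i < k then f i else 0"])
       (auto simp: F3_words_def fun_eq_iff PiE_def extensional_def)
  then show "card (F3_words k) = 3 ^ k" "finite (F3_words k)"
    by (simp_all add: bij_betw_same_card bij_betw_finite card_PiE finite_PiE)
qed

definition dot :: "nat \<Rightarrow> (nat \<Rightarrow> 'a) \<Rightarrow> (nat \<Rightarrow> 'a) \<Rightarrow> 'a::comm_ring" where
  "dot k w p = (\<Sum>i<k. w i * p i)"

lemma dot_add_left: "dot k (\<lambda>i. w i + w' i) p = dot k w p + dot k w' p"
  and dot_diff_left: "dot k (\<lambda>i. w i - w' i) p = dot k w p - dot k w' p"
  and dot_add_right: "dot k w (\<lambda>i. p i + q i) = dot k w p + dot k w q"
  and dot_diff_right: "dot k w (\<lambda>i. p i - q i) = dot k w p - dot k w q"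
  and dot_uminus_right: "dot k w (\<lambda>i. - p i) = - dot k w p"
  and dot_zero_right: "dot k w (\<lambda>i. 0) = 0"
  by (simp_all add: dot_def algebra_simps sum.distrib sum_subtractf sum_negf)

lemma dot_two_point:
  assumes "i < k" "j < k" "i \<noteq> j"
  shows "dot k (\<lambda>l. if l = i then x else if l = j then y else 0) p = x * p i + y * p j"
proof -
  have "dot k (\<lambda>l. if l = i then x else if l = j then y else 0) p
      = (\<Sum>l<k. (if l = i then x * p i else 0) + (if l = j then y * p j else 0))"
    unfolding dot_def by (rule sum.cong) (use assms in auto)
  also have "\<dots> = x * p i + y * p j"
    using assms by (simp add: sum.distrib)
  finally show ?thesis .
qed

definition indep_pair :: "nat \<Rightarrow> (nat \<Rightarrow> 'a::comm_ring) \<Rightarrow> (nat \<Rightarrow> 'a) \<Rightarrow> bool" where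
  "indep_pair k a b \<longleftrightarrow> (\<exists>i<k. \<exists>j<k. a i * b j \<noteq> a j * b i)"

lemma indep_pair_swap: "indep_pair k a b \<Longrightarrow> indep_pair k b a"
  and indep_pair_uminus: "indep_pair k a b \<Longrightarrow> indep_pair k (\<lambda>i. - a i) (\<lambda>i. - b i)"
  unfolding indep_pair_def by (metis mult.commute) simp

lemma indep_pair_distinct:
  assumes "indep_pair k a (b :: word)"
  shows "a \<noteq> b" "a \<noteq> (\<lambda>i. - b i)" "a \<noteq> (\<lambda>i. - a i)" "b \<noteq> (\<lambda>i. - b i)"
proof -
  obtain i j where ij: "a i * b j \<noteq> a j * b i" using assms by (auto simp: indep_pair_def)
  show "a \<noteq> b" "a \<noteq> (\<lambda>i. - b i)"
    using ij by (auto simp: mult.commute)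
  show "a \<noteq> (\<lambda>i. - a i)" "b \<noteq> (\<lambda>i. - b i)"
  proof -
    have "a i \<noteq> 0 \<or> a j \<noteq> 0" "b i \<noteq> 0 \<or> b j \<noteq> 0" using ij by auto
    then show "a \<noteq> (\<lambda>i. - a i)" "b \<noteq> (\<lambda>i. - b i)" by (auto simp: fun_eq_iff)
  qed
qed

lemma indep_pairI:
  assumes "a \<in> F3_words k" "b \<in> F3_words k" "a \<noteq> (\<lambda>i. 0)" "b \<noteq> (\<lambda>i. 0)" "a \<noteq> b"
    "b \<noteq> (\<lambda>i. - a i)"
  shows "indep_pair k a b"
proof (rule ccontr)
  assume dep: "\<not> indep_pair k a b"
  obtain i where i: "i < k" "a i \<noteq> 0" using assms(1,3) by (rule F3_words_nonzero_coord)
  define c where "c = b i * a i"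
  have "b l = c * a l" for l
  proof (cases "l < k")
    case True
    then have "a i * a i * b l = a i * a l * b i"
      using dep i by (auto simp: indep_pair_def mult.assoc)
    then show ?thesis using F3_square_nonzero[OF i(2)] by (simp add: c_def ac_simps)
  next
    case False
    then show ?thesis using assms(1,2) by (simp add: F3_words_def)
  qed
  then have "b = (\<lambda>l. c * a l)" by blast
  then show False using assms(4-6) by (cases c rule: F3_exhaust) auto
qed

definition dot_pair :: "nat \<Rightarrow> word \<Rightarrow> word \<Rightarrow> word \<Rightarrow> 3 \<times> 3" where
  "dot_pair k a b w = (dot k w a, dot k w b)"

lemma dot_pair_surj:
  assumes "indep_pair k a b"
  obtains w where "w \<in> F3_words k" "dot_pair k a b w = (s, t)"
proof -
  obtain i j where ij: "i < k" "j < k" "a i * b j \<noteq> a j * b i"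
    using assms by (auto simp: indep_pair_def)
  have "i \<noteq> j" using ij by (auto simp: mult.commute)
  define d where "d = a i * b j - a j * b i"
  have d: "d * d = 1" using ij(3) by (intro F3_square_nonzero) (simp add: d_def)
  text \<open>Cramer's rule, with \<open>d\<close> its own inverse.\<close>
  define w where "w = (\<lambda>l. if l = i then d * (s * b j - t * a j)
                            else if l = j then d * (t * a i - s * b i) else 0)"
  have "w \<in> F3_words k" using ij by (auto simp: w_def F3_words_def)
  moreover have "dot k w a = (d * d) * s" "dot k w b = (d * d) * t"
    unfolding w_def using ij \<open>i \<noteq> j\<close> by (simp_all add: dot_two_point d_def algebra_simps)
  ultimately show ?thesis using that d by (simp add: dot_pair_def)
qed

lemma card_dot_pair_fibre:
  assumes "indep_pair k a b"
  shows "9 * card {w \<in> F3_words k. dot_pair k a b w = st} = 3 ^ k"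
proof -
  let ?fibre = "\<lambda>st. {w \<in> F3_words k. dot_pair k a b w = st}"
  have fibre_eq: "card (?fibre st) = card (?fibre (0, 0))" for st
  proof -
    obtain w0 where w0: "w0 \<in> F3_words k" "dot_pair k a b w0 = st"
      using dot_pair_surj[OF assms] by (metis surj_pair)
    have "bij_betw (\<lambda>w l. w l + w0 l) (?fibre (0, 0)) (?fibre st)"
    proof (rule bij_betw_byWitness[where f' = "\<lambda>w l. w l - w0 l"])
      show "(\<lambda>w l. w l + w0 l) ` ?fibre (0, 0) \<subseteq> ?fibre st"
        using w0 by (auto simp: dot_pair_def dot_add_left)
      show "(\<lambda>w l. w l - w0 l) ` ?fibre st \<subseteq> ?fibre (0, 0)"
        using w0 by (auto simp: dot_pair_def dot_diff_left)
    qed simp_all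
    then show ?thesis by (simp add: bij_betw_same_card)
  qed
  have "card (F3_words k) = card (?fibre (0, 0)) * card (UNIV :: (3 \<times> 3) set)"
    using sum_comp_uniform_fibres[where h = "\<lambda>_. 1::nat", OF finite_F3_words fibre_eq] by simp
  then show ?thesis
    using fibre_eq[of st] by (simp add: card_F3_words card_cartesian_product flip: UNIV_Times_UNIV)
qed

section \<open>The tetracode\<close>

definition tetra :: "nat \<Rightarrow> 'a \<times> 'a \<Rightarrow> 'a::ab_group_add" where
  "tetra t u = (case u of (x, y) \<Rightarrow>
     if t = 0 then x else if t = 1 then y else if t = 2 then x + y else x - y)"

lemma ex_nat_less_4: "(\<exists>t::nat<4. P t) \<longleftrightarrow> P 0 \<or> P 1 \<or> P 2 \<or> P 3"
  by (auto simp: numeral_eq_Suc less_Suc_eq)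

lemma tetra_opposite_coord:
  fixes u v :: "3 \<times> 3"
  assumes "u \<noteq> (0, 0)" "v \<noteq> (0, 0)" "u \<noteq> v"
  shows "\<exists>t<4. tetra t u \<noteq> 0 \<and> tetra t v = - tetra t u"
proof -
  obtain x y x' y' where "u = (x, y)" "v = (x', y')" by fastforce
  with assms show ?thesis
    unfolding ex_nat_less_4
    by (cases x rule: F3_exhaust; cases y rule: F3_exhaust;
        cases x' rule: F3_exhaust; cases y' rule: F3_exhaust) (simp_all add: tetra_def)
qed

section \<open>Separating blocks\<close>

definition block_values :: "nat \<Rightarrow> word \<times> word \<Rightarrow> word \<Rightarrow> 3 \<times> 3" where
  "block_values k AB p = (dot k (fst AB) p, dot k (snd AB) p)"

definition separates :: "nat \<Rightarrow> word \<times> word \<Rightarrow> word \<Rightarrow> word \<Rightarrow> bool" where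
  "separates k AB a b \<longleftrightarrow> block_values k AB a \<noteq> (0, 0) \<and> block_values k AB b \<noteq> (0, 0)
     \<and> block_values k AB a \<noteq> block_values k AB b"

lemma separates_swap: "separates k AB b a \<longleftrightarrow> separates k AB a b"
  by (auto simp: separates_def)

lemma separates_uminus: "separates k AB (\<lambda>i. - a i) (\<lambda>i. - b i) \<longleftrightarrow> separates k AB a b"
  by (simp add: separates_def block_values_def dot_uminus_right)

text \<open>Of the 81 matrices over \<open>F\<^sub>3\<close> with rows \<open>s\<close> and \<open>t\<close>, exactly 25 have a zero column or
  two equal columns.\<close>

lemma card_nonseparating_matrices:
  "(\<Sum>s::3 \<times> 3\<in>UNIV. \<Sum>t::3 \<times> 3\<in>UNIV. of_bool ((fst s, fst t) = (0, 0) \<or> (snd s, snd t) = (0, 0)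
      \<or> (fst s, fst t) = (snd s, snd t))) = (25::nat)"
proof -
  have pairs: "(\<Sum>s::3 \<times> 3\<in>UNIV. g s) = (\<Sum>x\<in>{0, 1, 2}. \<Sum>y\<in>{0, 1, 2}. g (x, y))" for g :: "3 \<times> 3 \<Rightarrow> nat"
  proof -
    have "(UNIV :: (3 \<times> 3) set) = {0, 1, 2} \<times> {0, 1, 2}"
      by (simp add: F3_UNIV flip: UNIV_Times_UNIV)
    then show ?thesis
      by (simp only: sum.cartesian_product case_prod_eta)
  qed
  show ?thesis
    by (simp add: pairs)
qed

lemma card_not_separating_block:
  assumes "indep_pair k a b"
  shows "81 * card {AB \<in> F3_words k \<times> F3_words k. \<not> separates k AB a b} = 25 * 9 ^ k"
proof -
  let ?V = "F3_words k"
  define c where "c = card {w \<in> ?V. dot_pair k a b w = (0, 0)}"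
  have c: "9 * c = 3 ^ k"
    using card_dot_pair_fibre[OF assms] by (simp add: c_def)
  have fibre: "card {w \<in> ?V. dot_pair k a b w = st} = c" for st
    using card_dot_pair_fibre[OF assms, of st] c by simp
  define G where "G s t \<longleftrightarrow> (fst s, fst t) = (0, 0) \<or> (snd s, snd t) = (0, 0)
      \<or> (fst s, fst t) = (snd s, snd t)" for s t :: "3 \<times> 3"
  have separates_iff: "separates k (A, B) a b \<longleftrightarrow> \<not> G (dot_pair k a b A) (dot_pair k a b B)" for A B
    by (auto simp: separates_def block_values_def dot_pair_def G_def)
  have "card {AB \<in> ?V \<times> ?V. \<not> separates k AB a b} = (\<Sum>AB\<in>?V \<times> ?V. of_bool (\<not> separates k AB a b))"
    by (simp add: Collect_conj_eq Int_commute)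
  also have "\<dots> = (\<Sum>(A, B)\<in>?V \<times> ?V. of_bool (G (dot_pair k a b A) (dot_pair k a b B)))"
    by (rule sum.cong) (auto simp: separates_iff simp del: sum_of_bool_eq)
  also have "\<dots> = (\<Sum>A\<in>?V. \<Sum>B\<in>?V. of_bool (G (dot_pair k a b A) (dot_pair k a b B)))"
    by (rule sum.cartesian_product[symmetric])
  also have "\<dots> = (\<Sum>A\<in>?V. c * (\<Sum>t\<in>UNIV. of_bool (G (dot_pair k a b A) t)))"
    using sum_comp_uniform_fibres[OF finite_F3_words fibre, of "\<lambda>t. of_bool (G _ t) :: nat"]
    by (simp del: sum_of_bool_eq)
  also have "\<dots> = c * (c * (\<Sum>s\<in>UNIV. \<Sum>t\<in>UNIV. of_bool (G s t)))"
    using sum_comp_uniform_fibres[OF finite_F3_words fibre, of "\<lambda>s. \<Sum>t\<in>UNIV. of_bool (G s t) :: nat"]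
    by (simp add: sum_distrib_left[symmetric] del: sum_of_bool_eq)
  also have "\<dots> = 25 * c\<^sup>2"
    using card_nonseparating_matrices by (simp add: G_def power2_eq_square)
  finally have "81 * card {AB \<in> ?V \<times> ?V. \<not> separates k AB a b} = 25 * (9 * c)\<^sup>2"
    by (simp add: power_mult_distrib)
  also have "(9 * c)\<^sup>2 = 9 ^ k"
    using c by (simp add: power2_eq_square flip: power_mult_distrib)
  finally show ?thesis .
qed

definition block_choices :: "nat \<Rightarrow> nat \<Rightarrow> (nat \<Rightarrow> word \<times> word) set" where
  "block_choices k m = {..<m} \<rightarrow>\<^sub>E F3_words k \<times> F3_words k"

lemma card_block_choices: "card (block_choices k m) = 9 ^ (k * m)"
  and finite_block_choices: "finite (block_choices k m)"
proof -
  have "card (F3_words k \<times> F3_words k) = 9 ^ k"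
    by (simp add: card_cartesian_product card_F3_words flip: power_mult_distrib)
  then show "card (block_choices k m) = 9 ^ (k * m)" "finite (block_choices k m)"
    by (simp_all add: block_choices_def card_PiE finite_PiE power_mult)
qed

lemma card_not_separating:
  assumes "indep_pair k a b"
  shows "81 ^ m * card {W \<in> block_choices k m. \<not> (\<exists>j<m. separates k (W j) a b)} = 25 ^ m * 9 ^ (k * m)"
proof -
  let ?bad = "{AB \<in> F3_words k \<times> F3_words k. \<not> separates k AB a b}"
  have "{W \<in> block_choices k m. \<not> (\<exists>j<m. separates k (W j) a b)} = {..<m} \<rightarrow>\<^sub>E ?bad"
    by (rule set_eqI) (simp add: block_choices_def PiE_iff, blast)
  then have "81 ^ m * card {W \<in> block_choices k m. \<not> (\<exists>j<m. separates k (W j) a b)}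
      = (81 * card ?bad) ^ m"
    by (simp add: card_PiE power_mult_distrib)
  also have "\<dots> = (25 * 9 ^ k) ^ m"
    by (simp only: card_not_separating_block[OF assms])
  also have "\<dots> = 25 ^ m * 9 ^ (k * m)"
    by (simp only: power_mult_distrib power_mult)
  finally show ?thesis .
qed

definition indep_pairs :: "nat \<Rightarrow> (word \<times> word) set" where
  "indep_pairs k = {(a, b) \<in> F3_words k \<times> F3_words k. indep_pair k a b}"

lemma card_indep_pairs_le: "card (indep_pairs k) \<le> 9 ^ k"
  and finite_indep_pairs: "finite (indep_pairs k)"
proof -
  have sub: "indep_pairs k \<subseteq> F3_words k \<times> F3_words k"
    by (auto simp: indep_pairs_def)
  have "card (F3_words k \<times> F3_words k) = 9 ^ k"
    by (simp add: card_cartesian_product card_F3_words flip: power_mult_distrib)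
  then show "card (indep_pairs k) \<le> 9 ^ k"
    using card_mono[OF _ sub] by simp
  show "finite (indep_pairs k)"
    using sub by (rule finite_subset) simp
qed

definition unseparated :: "nat \<Rightarrow> nat \<Rightarrow> (nat \<Rightarrow> word \<times> word) \<Rightarrow> (word \<times> word) set" where
  "unseparated k m W = {(a, b) \<in> indep_pairs k. \<not> (\<exists>j<m. separates k (W j) a b)}"

lemma finite_unseparated: "finite (unseparated k m W)"
  by (rule finite_subset[OF _ finite_indep_pairs]) (auto simp: unseparated_def)

text \<open>Unseparated pairs come in fours: swap a pair, negate it, or both.\<close>

lemma four_le_card_unseparated:
  assumes "unseparated k m W \<noteq> {}"
  shows "4 \<le> card (unseparated k m W)"
proof -
  obtain a b where ab: "(a, b) \<in> unseparated k m W" using assms by auto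
  let ?na = "\<lambda>i. - a i" and ?nb = "\<lambda>i. - b i"
  have indep: "indep_pair k a b" using ab by (simp add: unseparated_def indep_pairs_def)
  have sub: "{(a, b), (b, a), (?na, ?nb), (?nb, ?na)} \<subseteq> unseparated k m W"
    using ab indep_pair_swap[OF indep] indep_pair_uminus[OF indep]
      indep_pair_uminus[OF indep_pair_swap[OF indep]]
    by (simp add: unseparated_def indep_pairs_def separates_swap separates_uminus)
  have "a \<noteq> b" "a \<noteq> ?na" "b \<noteq> ?nb" "a \<noteq> ?nb"
    using indep_pair_distinct[OF indep] by simp_all
  moreover from this have "?na \<noteq> ?nb" "b \<noteq> ?na"
    by (auto simp: fun_eq_iff) (metis minus_minus)
  ultimately have "card {(a, b), (b, a), (?na, ?nb), (?nb, ?na)} = 4"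
    by auto
  then show ?thesis
    using card_mono[OF finite_unseparated sub] by simp
qed

definition separates_all :: "nat \<Rightarrow> nat \<Rightarrow> (nat \<Rightarrow> word \<times> word) \<Rightarrow> bool" where
  "separates_all k m W \<longleftrightarrow> (\<forall>(a, b) \<in> indep_pairs k. \<exists>j<m. separates k (W j) a b)"

lemma separates_all_eq_unseparated_empty: "separates_all k m W \<longleftrightarrow> unseparated k m W = {}"
  by (auto simp: separates_all_def unseparated_def)

lemma ex_separates_all:
  assumes "9 ^ k * 25 ^ m < 4 * (81::nat) ^ m"
  shows "\<exists>W. separates_all k m W"
proof (rule ccontr)
  assume none: "\<not> ?thesis"
  let ?Ws = "block_choices k m" and ?P = "indep_pairs k"
  have "unseparated k m W \<noteq> {}" if "W \<in> ?Ws" for W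
    using none that by (auto simp: separates_all_eq_unseparated_empty)
  then have "4 * 9 ^ (k * m) \<le> (\<Sum>W\<in>?Ws. card (unseparated k m W))"
    using sum_bounded_below[of ?Ws "4::nat" "\<lambda>W. card (unseparated k m W)"] four_le_card_unseparated
    by (simp add: card_block_choices mult.commute)
  also have "\<dots> = (\<Sum>W\<in>?Ws. card {ab \<in> ?P. ab \<in> unseparated k m W})"
    by (rule sum.cong) (auto simp: unseparated_def intro: arg_cong[where f = card])
  also have "\<dots> = (\<Sum>ab\<in>?P. card {W \<in> ?Ws. ab \<in> unseparated k m W})"
    by (rule sum_card_filter_swap[OF finite_block_choices finite_indep_pairs])
  finally have "81 ^ m * (4 * 9 ^ (k * m))
      \<le> (\<Sum>ab\<in>?P. 81 ^ m * card {W \<in> ?Ws. ab \<in> unseparated k m W})"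
    unfolding sum_distrib_left[symmetric] by (rule mult_le_mono2)
  also have "\<dots> = (\<Sum>ab\<in>?P. 25 ^ m * 9 ^ (k * m))"
  proof (rule sum.cong)
    fix ab assume "ab \<in> ?P"
    then obtain a b where "ab = (a, b)" "indep_pair k a b" by (auto simp: indep_pairs_def)
    then show "81 ^ m * card {W \<in> ?Ws. ab \<in> unseparated k m W} = 25 ^ m * 9 ^ (k * m)"
      using card_not_separating[of k a b m] \<open>ab \<in> ?P\<close> by (simp add: unseparated_def)
  qed simp
  also have "\<dots> \<le> 9 ^ k * (25 ^ m * 9 ^ (k * m))"
    using card_indep_pairs_le by simp
  finally have "(4 * 81 ^ m) * 9 ^ (k * m) \<le> (9 ^ k * 25 ^ m) * (9::nat) ^ (k * m)"
    by (simp add: ac_simps)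
  with assms show False
    by simp
qed

section \<open>The concatenated code\<close>

lemma linear_code_image:
  fixes f :: "word \<Rightarrow> word"
  assumes "f ` F3_words k \<subseteq> F3_words n" "f (\<lambda>i. 0) = (\<lambda>i. 0)"
    and add: "\<And>p q. p \<in> F3_words k \<Longrightarrow> q \<in> F3_words k \<Longrightarrow> f (\<lambda>i. p i + q i) = (\<lambda>i. f p i + f q i)"
  shows "linear_code n (f ` F3_words k)"
proof -
  have zero: "(\<lambda>i. 0) \<in> f ` F3_words k"
    using assms(2) F3_words_zero by (metis image_eqI)
  have plus: "(\<lambda>i. x i + y i) \<in> f ` F3_words k"
    if x: "x \<in> f ` F3_words k" and y: "y \<in> f ` F3_words k" for x y
  proof -
    obtain p q where pq: "p \<in> F3_words k" "q \<in> F3_words k" "x = f p" "y = f q"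
      using x y by blast
    then have "(\<lambda>i. x i + y i) = f (\<lambda>i. p i + q i)" using add by simp
    then show ?thesis using pq by simp
  qed
  text \<open>Over \<open>F\<^sub>3\<close> every scalar multiple is a sum of copies.\<close>
  have scale: "(\<lambda>i. c * x i) \<in> f ` F3_words k" if "x \<in> f ` F3_words k" for c x
  proof (cases c rule: F3_exhaust)
    case 1
    then show ?thesis using zero by simp
  next
    case 2
    then show ?thesis using that by simp
  next
    case 3
    then have "(\<lambda>i. c * x i) = (\<lambda>i. x i + x i)" by (simp only: mult_2)
    then show ?thesis using plus[OF that that] by simp
  qed
  show ?thesis
    unfolding linear_code_def using assms(1) zero plus scale by (intro conjI ballI allI) simp_all
qed

lemma trifferentI_opposite_coord:
  assumes lin: "linear_code n C"
    and opp: "\<And>a b. a \<in> C \<Longrightarrow> b \<in> C \<Longrightarrow> a \<noteq> (\<lambda>i. 0) \<Longrightarrow> b \<noteq> (\<lambda>i. 0) \<Longrightarrow> a \<noteq> b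
      \<Longrightarrow> \<exists>i<n. a i \<noteq> 0 \<and> b i = - a i"
  shows "trifferent n C"
  unfolding trifferent_def
proof (intro ballI impI)
  fix x y z assume C: "x \<in> C" "y \<in> C" "z \<in> C" and distinct: "x \<noteq> y \<and> y \<noteq> z \<and> x \<noteq> z"
  have add: "(\<lambda>i. u i + v i) \<in> C" if "u \<in> C" "v \<in> C" for u v
    using lin that by (simp add: linear_code_def)
  have scale: "(\<lambda>i. c * u i) \<in> C" if "u \<in> C" for c u
    using lin that by (simp add: linear_code_def)
  have diff: "(\<lambda>i. u i - v i) \<in> C" if "u \<in> C" "v \<in> C" for u v
    using add[OF that(1) scale[OF that(2), of 2]] by simp
  have "(\<lambda>i. y i - x i) \<noteq> (\<lambda>i. 0)" "(\<lambda>i. z i - x i) \<noteq> (\<lambda>i. 0)"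
    "(\<lambda>i. y i - x i) \<noteq> (\<lambda>i. z i - x i)"
    using distinct by (simp_all add: fun_eq_iff) (metis, metis)
  then obtain i where i: "i < n" "y i - x i \<noteq> 0" "z i - x i = - (y i - x i)"
    using opp[OF diff[OF C(2,1)] diff[OF C(3,1)]] by blast
  define e where "e = y i - x i"
  have "e \<noteq> 0" using i(2) by (simp add: e_def)
  have "y i = x i + e" "z i = x i - e"
    using i(3) by (simp_all add: e_def algebra_simps)
  then have "{x i, y i, z i} = UNIV"
    using F3_triple_eq_UNIV[OF \<open>e \<noteq> 0\<close>, of "x i"] by (simp only:)
  then show "\<exists>i<n. {x i, y i, z i} = UNIV"
    using i(1) by blast
qed

definition encode :: "nat \<Rightarrow> nat \<Rightarrow> (nat \<Rightarrow> word \<times> word) \<Rightarrow> word \<Rightarrow> word" where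
  "encode k m W p i = (if i < 4 * m then tetra (i mod 4) (block_values k (W (i div 4)) p) else 0)"

lemma encode_block: "j < m \<Longrightarrow> t < 4 \<Longrightarrow> encode k m W p (4 * j + t) = tetra t (block_values k (W j) p)"
  by (simp add: encode_def)

lemma encode_add: "encode k m W (\<lambda>i. p i + q i) = (\<lambda>i. encode k m W p i + encode k m W q i)"
  and encode_diff: "encode k m W (\<lambda>i. p i - q i) = (\<lambda>i. encode k m W p i - encode k m W q i)"
  and encode_uminus: "encode k m W (\<lambda>i. - p i) = (\<lambda>i. - encode k m W p i)"
  and encode_zero: "encode k m W (\<lambda>i. 0) = (\<lambda>i. 0)"
  by (simp_all add: fun_eq_iff encode_def tetra_def block_values_def dot_add_right dot_diff_right
      dot_uminus_right dot_zero_right)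

lemma encode_in_F3_words: "4 * m \<le> n \<Longrightarrow> encode k m W p \<in> F3_words n"
  by (simp add: F3_words_def encode_def)

lemma linear_code_encode: "4 * m \<le> n \<Longrightarrow> linear_code n (encode k m W ` F3_words k)"
  by (rule linear_code_image) (auto simp: encode_in_F3_words encode_zero encode_add)

text \<open>Separation of \<open>p\<close> from a unit vector forces a nonzero block value of \<open>p\<close>; this is where
  \<open>k \<ge> 2\<close> is needed.\<close>

lemma encode_eq_zero_imp:
  assumes "2 \<le> k" "separates_all k m W" "p \<in> F3_words k" "encode k m W p = (\<lambda>i. 0)"
  shows "p = (\<lambda>i. 0)"
proof (rule ccontr)
  assume "p \<noteq> (\<lambda>i. 0)"
  then obtain i where i: "i < k" "p i \<noteq> 0" using F3_words_nonzero_coord[OF assms(3)] by blast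
  define j where "j = (if i = 0 then 1 else (0::nat))"
  have j: "j < k" "j \<noteq> i" using assms(1) by (auto simp: j_def)
  define e where "e = (\<lambda>l. if l = j then 1 else (0::3))"
  have "indep_pair k p e"
    unfolding indep_pair_def using i j by (intro exI[of _ i] conjI exI[of _ j]) (auto simp: e_def)
  moreover have "e \<in> F3_words k" using j by (auto simp: e_def F3_words_def)
  ultimately obtain b where b: "b < m" "separates k (W b) p e"
    using assms(2,3) by (auto simp: separates_all_def indep_pairs_def)
  have "tetra 0 (block_values k (W b) p) = 0" "tetra 1 (block_values k (W b) p) = 0"
    using encode_block[OF b(1), of 0 k W p] encode_block[OF b(1), of 1 k W p] assms(4) by simp_all
  then have "block_values k (W b) p = (0, 0)"
    by (simp add: tetra_def split: prod.splits)
  with b(2) show False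
    by (simp add: separates_def)
qed

lemma inj_on_encode:
  assumes "2 \<le> k" "separates_all k m W"
  shows "inj_on (encode k m W) (F3_words k)"
proof (rule inj_onI)
  fix p q assume "p \<in> F3_words k" "q \<in> F3_words k" "encode k m W p = encode k m W q"
  then have "(\<lambda>i. p i - q i) = (\<lambda>i. 0)"
    using encode_eq_zero_imp[OF assms] by (simp add: encode_diff)
  then show "p = q"
    by (simp add: fun_eq_iff)
qed

lemma trifferent_encode:
  assumes "2 \<le> k" "separates_all k m W" "4 * m \<le> n"
  shows "trifferent n (encode k m W ` F3_words k)"
proof (rule trifferentI_opposite_coord[OF linear_code_encode[OF assms(3)]])
  fix a b assume "a \<in> encode k m W ` F3_words k" "b \<in> encode k m W ` F3_words k"
    and nonzero: "a \<noteq> (\<lambda>i. 0)" "b \<noteq> (\<lambda>i. 0)" and "a \<noteq> b"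
  then obtain p q where pq: "p \<in> F3_words k" "q \<in> F3_words k" "a = encode k m W p" "b = encode k m W q"
    by blast
  have "p \<noteq> (\<lambda>i. 0)" "q \<noteq> (\<lambda>i. 0)" "p \<noteq> q"
    using nonzero \<open>a \<noteq> b\<close> pq by (auto simp: encode_zero)
  show "\<exists>i<n. a i \<noteq> 0 \<and> b i = - a i"
  proof (cases "q = (\<lambda>i. - p i)")
    case True
    obtain i where "i < n" "a i \<noteq> 0"
      using encode_in_F3_words[OF assms(3)] nonzero(1) pq(3) by (metis F3_words_nonzero_coord)
    moreover have "b i = - a i"
      using True pq by (simp add: encode_uminus)
    ultimately show ?thesis by blast
  next
    case False
    then have "indep_pair k p q"
      using indep_pairI pq \<open>p \<noteq> (\<lambda>i. 0)\<close> \<open>q \<noteq> (\<lambda>i. 0)\<close> \<open>p \<noteq> q\<close> by blast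
    then obtain j where j: "j < m" "separates k (W j) p q"
      using assms(2) pq by (auto simp: separates_all_def indep_pairs_def)
    then obtain t where t: "t < 4" "tetra t (block_values k (W j) p) \<noteq> 0"
        "tetra t (block_values k (W j) q) = - tetra t (block_values k (W j) p)"
      using tetra_opposite_coord[of "block_values k (W j) p" "block_values k (W j) q"] j(2)
      unfolding separates_def by blast
    have "4 * j + t < n" using j(1) t(1) assms(3) by linarith
    then show ?thesis
      using t pq encode_block[OF j(1) t(1)] by auto
  qed
qed

section \<open>Choice of parameters\<close>

lemma ex_power_between:
  fixes b x :: real
  assumes "1 < b" "1 < x"
  obtains k where "b ^ k < x" "x \<le> b ^ Suc k"
proof -
  have ex: "\<exists>n. x \<le> b ^ n"
    using real_arch_pow[OF assms(1)] by (meson less_le)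
  define n where "n = (LEAST n. x \<le> b ^ n)"
  have "x \<le> b ^ n"
    unfolding n_def by (rule LeastI_ex[OF ex])
  moreover have "n \<noteq> 0"
  proof
    assume "n = 0"
    with \<open>x \<le> b ^ n\<close> assms(2) show False by simp
  qed
  then obtain k where "n = Suc k" by (cases n) auto
  moreover have "\<not> x \<le> b ^ k"
    using not_less_Least[of k "\<lambda>n. x \<le> b ^ n"] \<open>n = Suc k\<close> by (simp add: n_def)
  ultimately show ?thesis using that[of k] by (simp add: not_le)
qed

text \<open>The dimension \<open>k\<close> is chosen with \<open>3\<^sup>k < 2 (9/5)\<^sup>m \<le> 3\<^sup>k\<^sup>+\<^sup>1\<close>.\<close>

lemma block_parameters:
  assumes "3 \<le> m"
  obtains k where "2 \<le> k" "9 ^ k * 25 ^ m < 4 * (81::nat) ^ m" "(9/5::real) ^ Suc m \<le> 3 ^ Suc k"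
proof -
  define Q where "Q = (9/5::real) ^ m"
  have "(9/5::real) ^ 3 \<le> Q"
    unfolding Q_def by (rule power_increasing[OF assms]) simp
  then have Q: "729/125 \<le> Q" by (simp add: power3_eq_cube)
  obtain k where k: "3 ^ k < 2 * Q" "2 * Q \<le> 3 ^ Suc k"
    using ex_power_between[of 3 "2 * Q"] Q by force
  have "2 \<le> k"
  proof (rule ccontr)
    assume "\<not> 2 \<le> k"
    then have "(3::real) ^ Suc k \<le> 3 ^ 2" by (intro power_increasing) simp_all
    with k(2) Q show False by simp
  qed
  moreover have "9 ^ k * 25 ^ m < 4 * (81::nat) ^ m"
  proof -
    have "(3 ^ k)\<^sup>2 < (2 * Q)\<^sup>2"
      using k(1) by (intro power_strict_mono) simp_all
    moreover have "((3::real) ^ k)\<^sup>2 = 9 ^ k" "(2 * Q)\<^sup>2 = 4 * (81 / 25) ^ m"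
      by (simp_all add: Q_def power2_eq_square flip: power_mult_distrib)
    ultimately have "(9::real) ^ k * 25 ^ m < 4 * (81 / 25) ^ m * 25 ^ m"
      by simp
    also have "\<dots> = 4 * 81 ^ m"
      by (simp flip: power_mult_distrib)
    finally show ?thesis
      by (metis (mono_tags) of_nat_less_iff of_nat_mult of_nat_numeral of_nat_power)
  qed
  moreover have "(9/5::real) ^ Suc m \<le> 3 ^ Suc k"
    using k(2) Q by (simp add: Q_def)
  ultimately show ?thesis using that by blast
qed

theorem theorem1p6:
  shows "\<exists>N::nat. \<forall>n\<ge>N. \<exists>C. linear_trifferent_code n C \<and>
           real (card C) \<ge> (1/3) * (9/5) powr (real n / 4)"
proof (intro exI[of _ 12] allI impI)
  fix n :: nat assume "12 \<le> n"
  define m where "m = n div 4"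
  have "3 \<le> m" "4 * m \<le> n" "n < 4 * Suc m"
    using \<open>12 \<le> n\<close> by (simp_all add: m_def)
  obtain k where k: "2 \<le> k" "9 ^ k * 25 ^ m < 4 * (81::nat) ^ m" "(9/5::real) ^ Suc m \<le> 3 ^ Suc k"
    using block_parameters[OF \<open>3 \<le> m\<close>] by blast
  obtain W where W: "separates_all k m W"
    using ex_separates_all[OF k(2)] by blast
  let ?C = "encode k m W ` F3_words k"
  have "(9/5) powr (real n / 4) \<le> (9/5) powr Suc m"
    using \<open>n < 4 * Suc m\<close> by (intro powr_mono) simp_all
  also have "\<dots> = (9/5) ^ Suc m"
    by (rule powr_realpow) simp
  also have "\<dots> \<le> 3 * card ?C"
    using k(3) card_image[OF inj_on_encode[OF k(1) W]] by (simp add: card_F3_words)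
  finally show "\<exists>C. linear_trifferent_code n C \<and> real (card C) \<ge> (1/3) * (9/5) powr (real n / 4)"
    using linear_code_encode[OF \<open>4 * m \<le> n\<close>] trifferent_encode[OF k(1) W \<open>4 * m \<le> n\<close>]
    by (intro exI[of _ ?C]) (simp add: linear_trifferent_code_def)
qed

end
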